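(* Let $G=(V,E)$ be a finite directed graph and $v_g\in V$ such that every vertex $v\in V$ has a directed path to $v_g$. Let $E'$ be $E$ with all edges out of $v_g$ removed, and build the environment $\mathcal{G}=(\mathcal{S},\mathcal{E})$ with $\mathcal{S}=V\cup\{s_f\}$ ($s_f$ a new vertex), $s_0:=v_g$, and $\mathcal{E}=\{(w\to u):(u\to w)\in E'\}\cup\{(s\to s_f): s\in V\}$. Then $\mathcal{G}$ is a GFlowNet environment with terminal set $\mathcal{X}=V$, and in $\mathcal{G}$ the quantity $\ell(v)$ equals the distance $d_G(v,v_g)$ from $v$ to $v_g$ in $G$. Let $\mathcal{R}:V\to(0,\infty)$ be arbitrary with $\mathcal{Z}=\sum_{v\in V}\mathcal{R}(v)$, and let $P_B$ be a backward policy on $\mathcal{G}$ with $\mathbb{E}[n_\tau]<\infty$ that minimizes $\mathbb{E}[n_\tau]$ among all backward policies satisfying $P_B(v\mid s_f)=\mathcal{R}(v)/\mathcal{Z}$ for all $v\in V$ and having finite $\mathbb{E}[n_\tau]$. Then for every $v\in V$, every sequence $v=u_0,u_1,\dots,u_k=v_g$ with $u_1,\dots,u_{k-1}\ne v_g$ and $\prod_{i=1}^{k}P_B(u_i\mid u_{i-1})>0$ is a shortest directed path from $v$ to $v_g$ in $G$ (i.e. each $(u_{i-1}\to u_i)\in E$ and $k=d_G(v,v_g)$). In particular, for uniform reward $\mathcal{R}\equiv1$ the minimal value is $\mathbb{E}[n_\tau]=\frac{1}{|V|}\sum_{v\in V}d_G(v,v_g)$.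
   Context: A GFlowNet environment is a finite directed graph $\mathcal{G}=(\mathcal{S},\mathcal{E})$ (possibly containing cycles) with a distinguished initial state $s_0$ having no incoming edges and a distinguished sink state $s_f$ having no outgoing edges, such that every state $s\in\mathcal{S}$ is reachable by a directed path from $s_0$ and $s_f$ is reachable by a directed path from $s$. A trajectory is a finite sequence $\tau=(s_0\to s_1\to\dots\to s_{n_\tau}\to s_f)$ with each consecutive pair an edge of $\mathcal{E}$ and $s_1,\dots,s_{n_\tau}\notin\{s_0,s_f\}$; $n_\tau\ge0$ is its length. The terminal states are $\mathcal{X}=\{s:(s\to s_f)\in\mathcal{E}\}$. For $s\in\mathcal{S}$, $\ell(s)$ denotes the number of edges in a shortest directed path from $s_0$ to $s$ in $\mathcal{G}$. A backward policy $P_B$ assigns to each $s'\in\mathcal{S}\setminus\{s_0\}$ a probability distribution $P_B(\cdot\mid s')$ on its parents $\{s:(s\to s')\in\mathcal{E}\}$ (zero probabilities allowed). It defines a Markov chain $X_0=s_f$, $\Pr[X_t=s\mid X_{t-1}=s']=P_B(s\mid s')$, with $s_0$ absorbing; letting $T$ be the hitting time of $s_0$, set $n_\tau=T-1$ (with $n_\tau=\infty$ if $s_0$ is never hit), and $\mathbb{E}[n_\tau]$ is its expectation. $d_G(v,v_g)$ is the number of edges in a shortest directed path from $v$ to $v_g$ in $G$. *)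

theory Defs
  imports "HOL-Analysis.Analysis"
begin

text \<open>A directed graph is an edge relation. The distance d(v,w) is the number of edges of a
shortest directed path from v to w (only used when w is reachable from v).\<close>

definition dist_G :: "('s \<times> 's) set \<Rightarrow> 's \<Rightarrow> 's \<Rightarrow> nat" where
  "dist_G Ed v w = (LEAST n. (v, w) \<in> Ed ^^ n)"

definition gfn_env :: "'s set \<Rightarrow> ('s \<times> 's) set \<Rightarrow> 's \<Rightarrow> 's \<Rightarrow> bool" where
  "gfn_env S Ed s0 sf \<longleftrightarrow>
     finite S \<and> Ed \<subseteq> S \<times> S \<and> s0 \<in> S \<and> sf \<in> S \<and> s0 \<noteq> sf \<and>
     (\<forall>s. (s, s0) \<notin> Ed) \<and> (\<forall>s. (sf, s) \<notin> Ed) \<and>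
     (\<forall>s\<in>S. (s0, s) \<in> Ed\<^sup>* \<and> (s, sf) \<in> Ed\<^sup>*)"

definition terminal_states :: "('s \<times> 's) set \<Rightarrow> 's \<Rightarrow> 's set" where
  "terminal_states Ed sf = {s. (s, sf) \<in> Ed}"

definition ell :: "('s \<times> 's) set \<Rightarrow> 's \<Rightarrow> 's \<Rightarrow> nat" where
  "ell Ed s0 s = dist_G Ed s0 s"

text \<open>A backward policy: \<open>P s s'\<close> is \<open>P_B(s | s')\<close>, a probability distribution on the
parents of each state \<open>s' \<noteq> s0\<close>.\<close>
definition backward_policy ::
  "'s set \<Rightarrow> ('s \<times> 's) set \<Rightarrow> 's \<Rightarrow> ('s \<Rightarrow> 's \<Rightarrow> real) \<Rightarrow> bool" where
  "backward_policy S Ed s0 P \<longleftrightarrow>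
     (\<forall>s'\<in>S - {s0}. (\<forall>s. 0 \<le> P s s') \<and> (\<forall>s. (s, s') \<notin> Ed \<longrightarrow> P s s' = 0) \<and>
        (\<Sum>s\<in>{s. (s, s') \<in> Ed}. P s s') = 1)"

text \<open>\<open>hit_prob Ed s0 P t s\<close> = probability that the backward Markov chain started at \<open>s\<close>
(with \<open>s0\<close> absorbing) hits \<open>s0\<close> for the first time at step \<open>t\<close>.\<close>
fun hit_prob :: "('s \<times> 's) set \<Rightarrow> 's \<Rightarrow> ('s \<Rightarrow> 's \<Rightarrow> real) \<Rightarrow> nat \<Rightarrow> 's \<Rightarrow> real" where
  "hit_prob Ed s0 P 0 s = (if s = s0 then 1 else 0)"
| "hit_prob Ed s0 P (Suc t) s =
     (if s = s0 then 0 else (\<Sum>p\<in>{p. (p, s) \<in> Ed}. P p s * hit_prob Ed s0 P t p))"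

text \<open>\<open>E[n_\<tau>]\<close> with \<open>n_\<tau> = T - 1\<close>, \<open>T\<close> the hitting time of \<open>s0\<close> from \<open>X_0 = sf\<close>,
and \<open>n_\<tau> = \<infinity>\<close> on the event that \<open>s0\<close> is never hit.\<close>
definition expected_len ::
  "('s \<times> 's) set \<Rightarrow> 's \<Rightarrow> 's \<Rightarrow> ('s \<Rightarrow> 's \<Rightarrow> real) \<Rightarrow> ennreal" where
  "expected_len Ed s0 sf P =
     (\<Sum>t. ennreal (hit_prob Ed s0 P (Suc t) sf) * of_nat t)
     + (if (\<Sum>t. ennreal (hit_prob Ed s0 P t sf)) < 1 then (top::ennreal) else 0)"

text \<open>States: \<open>Some v\<close> for \<open>v \<in> V\<close>, and \<open>None\<close> is the new sink \<open>s_f\<close>; \<open>s0 = Some v_g\<close>.\<close>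
definition env_states :: "'a set \<Rightarrow> 'a option set" where
  "env_states V = Some ` V \<union> {None}"

definition env_edges :: "'a set \<Rightarrow> ('a \<times> 'a) set \<Rightarrow> 'a \<Rightarrow> ('a option \<times> 'a option) set" where
  "env_edges V E vg =
     {(Some w, Some u) | u w. (u, w) \<in> E \<and> u \<noteq> vg} \<union> {(Some s, None) | s. s \<in> V}"

end

theory Submission
  imports Defs
begin

(* Reversing the edges makes the backward chain started at v a walk towards v_g in G, so it
   cannot hit v_g before time d(v) = d_G(v, v_g). Splitting E[n_tau] according to the first
   step out of s_f, and bounding the law h_v of the hitting time from v by
   sum_t t h_v(t) >= d(v) + 1 - h_v(d(v)), gives
     E[n_tau] >= sum_v P_B(v | s_f) (d(v) + 1 - h_v(d(v))),
   while the policy that always steps to a neighbour one closer to v_g attains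
   sum_v P_B(v | s_f) d(v). So an optimal policy hits v_g from every v at time d(v) almost
   surely; a positive-probability step that does not decrease d would lose mass at that time,
   hence every positive-probability path is a shortest path. *)

section \<open>Hitting probabilities of backward policies\<close>

lemma hit_prob_nonneg:
  assumes "Ed \<subseteq> S \<times> S" and "backward_policy S Ed s0 P" and "s \<in> S"
  shows "0 \<le> hit_prob Ed s0 P t s"
  using assms(3)
proof (induction t arbitrary: s)
  case 0
  then show ?case by simp
next
  case (Suc t)
  have "0 \<le> P p s * hit_prob Ed s0 P t p" if "(p, s) \<in> Ed" "s \<noteq> s0" for p
    using that assms(1,2) Suc by (auto simp: backward_policy_def intro!: Suc.IH)
  then show ?case by (auto intro: sum_nonneg)
qed

lemma hit_prob_partial_sums_le_1:
  assumes sub: "Ed \<subseteq> S \<times> S" and pol: "backward_policy S Ed s0 P" and "s \<in> S"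
  shows "(\<Sum>t<n. hit_prob Ed s0 P t s) \<le> 1"
  using assms(3)
proof (induction n arbitrary: s)
  case 0
  then show ?case by simp
next
  case (Suc n)
  show ?case
  proof (cases "s = s0")
    case True
    then show ?thesis unfolding sum.lessThan_Suc_shift by simp
  next
    case False
    let ?Pa = "{p. (p, s) \<in> Ed}"
    have P: "0 \<le> P p s" "(\<Sum>p\<in>?Pa. P p s) = 1" for p
      using pol Suc.prems False by (auto simp: backward_policy_def)
    have "(\<Sum>t<Suc n. hit_prob Ed s0 P t s) = (\<Sum>t<n. \<Sum>p\<in>?Pa. P p s * hit_prob Ed s0 P t p)"
      using False unfolding sum.lessThan_Suc_shift by simp
    also have "\<dots> = (\<Sum>p\<in>?Pa. P p s * (\<Sum>t<n. hit_prob Ed s0 P t p))"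
      by (simp add: sum.swap[of _ "{..<n}"] sum_distrib_left)
    also have "\<dots> \<le> (\<Sum>p\<in>?Pa. P p s)"
      using sub Suc.IH P(1) by (intro sum_mono) (auto intro: mult_left_le)
    finally show ?thesis using P(2) by simp
  qed
qed

lemma
  assumes "Ed \<subseteq> S \<times> S" and "backward_policy S Ed s0 P" and "s \<in> S"
  shows summable_hit_prob: "summable (\<lambda>t. hit_prob Ed s0 P t s)"
    and suminf_hit_prob_le_1: "(\<Sum>t. hit_prob Ed s0 P t s) \<le> 1"
proof -
  have partial: "(\<Sum>t<n. hit_prob Ed s0 P t s) \<le> 1" for n
    using hit_prob_partial_sums_le_1[OF assms] .
  show "summable (\<lambda>t. hit_prob Ed s0 P t s)"
    using partial[of "Suc _"] hit_prob_nonneg[OF assms]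
    by (intro bounded_imp_summable) (auto simp: lessThan_Suc_atMost)
  then show "(\<Sum>t. hit_prob Ed s0 P t s) \<le> 1"
    using partial by (rule suminf_le_const)
qed

lemma hit_prob_le_1:
  assumes "Ed \<subseteq> S \<times> S" and "backward_policy S Ed s0 P" and "s \<in> S"
  shows "hit_prob Ed s0 P t s \<le> 1"
proof -
  have "hit_prob Ed s0 P t s \<le> (\<Sum>t'<Suc t. hit_prob Ed s0 P t' s)"
    using hit_prob_nonneg[OF assms] by (intro member_le_sum) auto
  also have "\<dots> \<le> 1" by (rule hit_prob_partial_sums_le_1[OF assms])
  finally show ?thesis .
qed

lemma relpow_if_hit_prob_nonzero:
  "hit_prob Ed s0 P t s \<noteq> 0 \<Longrightarrow> (s0, s) \<in> Ed ^^ t"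
proof (induction t arbitrary: s)
  case 0
  then show ?case by (simp split: if_splits)
next
  case (Suc t)
  then obtain p where "(p, s) \<in> Ed" and "hit_prob Ed s0 P t p \<noteq> 0"
    by (auto split: if_splits elim: sum.not_neutral_contains_not_neutral)
  with Suc.IH show ?case by auto
qed

lemma hit_prob_eq_0_below_dist:
  "t < dist_G Ed s0 s \<Longrightarrow> hit_prob Ed s0 P t s = 0"
  using relpow_if_hit_prob_nonzero Least_le[of "\<lambda>n. (s0, s) \<in> Ed ^^ n" t]
  unfolding dist_G_def by fastforce

lemma expected_len_eq_ennreal:
  assumes "Ed \<subseteq> S \<times> S" and "backward_policy S Ed s0 P" and "sf \<in> S" and "sf \<noteq> s0"
    and mass: "(\<lambda>t. hit_prob Ed s0 P (Suc t) sf) sums 1"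
    and moment: "(\<lambda>t. hit_prob Ed s0 P (Suc t) sf * real t) sums L"
  shows "expected_len Ed s0 sf P = ennreal L"
proof -
  have nonneg: "0 \<le> hit_prob Ed s0 P t sf" for t
    using hit_prob_nonneg[OF assms(1-3)] .
  have "(\<lambda>t. hit_prob Ed s0 P t sf) sums 1"
    using mass sums_Suc_iff[of "\<lambda>t. hit_prob Ed s0 P t sf" 1] \<open>sf \<noteq> s0\<close> by simp
  from suminf_ennreal_eq[OF nonneg this] have "(\<Sum>t. ennreal (hit_prob Ed s0 P t sf)) = 1"
    by simp
  moreover have "(\<Sum>t. ennreal (hit_prob Ed s0 P (Suc t) sf) * of_nat t) = ennreal L"
    using suminf_ennreal_eq[OF _ moment] nonneg
    by (simp add: ennreal_mult ennreal_of_nat_eq_real_of_nat del: hit_prob.simps)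
  ultimately show ?thesis unfolding expected_len_def by simp
qed

lemma
  assumes "Ed \<subseteq> S \<times> S" and "backward_policy S Ed s0 P" and "sf \<in> S"
    and "sf \<noteq> s0" and finite_len: "expected_len Ed s0 sf P < top"
  shows expected_len_finite_mass: "(\<lambda>t. hit_prob Ed s0 P (Suc t) sf) sums 1"
    and expected_len_finite_moment: "summable (\<lambda>t. hit_prob Ed s0 P (Suc t) sf * real t)"
proof -
  have nonneg: "0 \<le> hit_prob Ed s0 P t sf" for t
    using hit_prob_nonneg[OF assms(1-3)] .
  have "(\<Sum>t. ennreal (hit_prob Ed s0 P t sf)) = ennreal (\<Sum>t. hit_prob Ed s0 P t sf)"
    using nonneg summable_hit_prob[OF assms(1-3)] by (rule suminf_ennreal2)
  then have "\<not> (\<Sum>t. hit_prob Ed s0 P t sf) < 1" and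
    moment: "(\<Sum>t. ennreal (hit_prob Ed s0 P (Suc t) sf) * of_nat t) \<noteq> top"
    using finite_len by (auto simp: expected_len_def split: if_splits)
  then have "(\<Sum>t. hit_prob Ed s0 P t sf) = 1"
    using suminf_hit_prob_le_1[OF assms(1-3)] by linarith
  then show "(\<lambda>t. hit_prob Ed s0 P (Suc t) sf) sums 1"
    using summable_hit_prob[OF assms(1-3)] \<open>sf \<noteq> s0\<close>
    by (subst sums_Suc_iff) (simp add: summable_sums_iff)
  show "summable (\<lambda>t. hit_prob Ed s0 P (Suc t) sf * real t)"
    using moment nonneg
    by (intro summable_suminf_not_top)
      (simp_all add: ennreal_mult ennreal_of_nat_eq_real_of_nat del: hit_prob.simps)
qed

section \<open>Finite mixtures of nonnegative sequences\<close>

lemma mixture_sums_1_imp_component_sums_1: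
  fixes q :: "'v \<Rightarrow> real" and h :: "'v \<Rightarrow> nat \<Rightarrow> real"
  assumes "finite V" and q_pos: "\<forall>v\<in>V. 0 < q v" and q_sum: "(\<Sum>v\<in>V. q v) = 1"
    and summable: "\<And>v. v \<in> V \<Longrightarrow> summable (h v)"
    and le_1: "\<And>v. v \<in> V \<Longrightarrow> suminf (h v) \<le> 1"
    and mixture: "(\<lambda>t. \<Sum>v\<in>V. q v * h v t) sums 1"
    and "v \<in> V"
  shows "h v sums 1"
proof -
  have "1 = (\<Sum>t. \<Sum>v\<in>V. q v * h v t)"
    using mixture by (simp add: sums_iff)
  also have "\<dots> = (\<Sum>v\<in>V. \<Sum>t. q v * h v t)"
    by (rule suminf_sum) (simp add: summable)
  also have "\<dots> = (\<Sum>v\<in>V. q v * suminf (h v))"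
    by (rule sum.cong) (simp_all add: summable suminf_mult)
  finally have sum_0: "(\<Sum>v\<in>V. q v * (1 - suminf (h v))) = 0"
    using q_sum by (simp add: right_diff_distrib sum_subtractf)
  have "0 \<le> q v * (1 - suminf (h v))" if "v \<in> V" for v
    using q_pos le_1 that by (simp add: less_imp_le)
  with sum_0 have "\<forall>v\<in>V. q v * (1 - suminf (h v)) = 0"
    by (subst (asm) sum_nonneg_eq_0_iff[OF \<open>finite V\<close>]) auto
  then have "suminf (h v) = 1"
    using \<open>v \<in> V\<close> q_pos by fastforce
  with summable_sums[OF summable[OF \<open>v \<in> V\<close>]] show ?thesis
    by simp
qed

lemma summable_mixture_component:
  fixes q :: "'v \<Rightarrow> real" and h :: "'v \<Rightarrow> nat \<Rightarrow> real"
  assumes "finite V" and "v \<in> V" and q_pos: "\<forall>v\<in>V. 0 < q v"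
    and h_nonneg: "\<And>v t. v \<in> V \<Longrightarrow> 0 \<le> h v t" and g_nonneg: "\<And>t. 0 \<le> g t"
    and mixture: "summable (\<lambda>t. (\<Sum>v\<in>V. q v * h v t) * g t)"
  shows "summable (\<lambda>t. h v t * g t)"
proof -
  have "summable (\<lambda>t. q v * (h v t * g t))"
  proof (rule summable_comparison_test'[OF mixture])
    fix t
    have "q v * h v t \<le> (\<Sum>v\<in>V. q v * h v t)"
      using assms(1,2) q_pos h_nonneg by (intro member_le_sum) (auto simp: less_imp_le)
    from this g_nonneg have "q v * h v t * g t \<le> (\<Sum>v\<in>V. q v * h v t) * g t"
      by (rule mult_right_mono)
    moreover have "0 \<le> q v * (h v t * g t)"
      using q_pos h_nonneg g_nonneg \<open>v \<in> V\<close> by (simp add: less_imp_le)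
    ultimately show "norm (q v * (h v t * g t)) \<le> (\<Sum>v\<in>V. q v * h v t) * g t"
      by (simp add: mult.assoc)
  qed
  then show ?thesis
    using q_pos[rule_format, OF \<open>v \<in> V\<close>] by simp
qed

lemma suminf_mixture:
  fixes q :: "'v \<Rightarrow> real" and h :: "'v \<Rightarrow> nat \<Rightarrow> real"
  assumes "\<And>v. v \<in> V \<Longrightarrow> summable (\<lambda>t. h v t * g t)"
  shows "(\<Sum>t. (\<Sum>v\<in>V. q v * h v t) * g t) = (\<Sum>v\<in>V. q v * (\<Sum>t. h v t * g t))"
proof -
  have "(\<Sum>t. (\<Sum>v\<in>V. q v * h v t) * g t) = (\<Sum>t. \<Sum>v\<in>V. q v * (h v t * g t))"
    by (simp add: sum_distrib_right mult.assoc)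
  also have "\<dots> = (\<Sum>v\<in>V. \<Sum>t. q v * (h v t * g t))"
    by (rule suminf_sum) (simp add: assms)
  also have "\<dots> = (\<Sum>v\<in>V. q v * (\<Sum>t. h v t * g t))"
    by (rule sum.cong) (simp_all add: assms suminf_mult)
  finally show ?thesis .
qed

text \<open>Sum the pointwise bound \<open>t h(t) \<ge> (d + 1) h(t) - [t = d] h(d)\<close>.\<close>
lemma first_moment_ge:
  fixes h :: "nat \<Rightarrow> real"
  assumes nonneg: "\<And>t. 0 \<le> h t" and mass: "h sums 1"
    and vanish: "\<And>t. t < d \<Longrightarrow> h t = 0" and moment: "summable (\<lambda>t. h t * real t)"
  shows "real d + 1 - h d \<le> (\<Sum>t. h t * real t)"
proof -
  have lower: "(\<lambda>t. (real d + 1) * h t - (if t = d then h t else 0)) sums ((real d + 1) * 1 - h d)"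
    by (intro sums_diff sums_mult mass sums_single)
  have pointwise: "(real d + 1) * h t - (if t = d then h t else 0) \<le> h t * real t" for t
  proof (cases "t \<le> d")
    case True
    then show ?thesis using vanish[of t] by (cases "t = d") (auto simp: algebra_simps)
  next
    case False
    then have "(real d + 1) * h t \<le> real t * h t"
      using nonneg[of t] by (intro mult_right_mono) auto
    then show ?thesis
      using False by (simp add: mult.commute)
  qed
  from sums_le[OF pointwise lower summable_sums[OF moment]] show ?thesis
    by simp
qed

section \<open>The environment of a graph with a goal vertex\<close>

locale goal_graph =
  fixes V :: "'a set" and E :: "('a \<times> 'a) set" and vg :: 'a
  assumes finite_V: "finite V" and E_subset: "E \<subseteq> V \<times> V" and vg_in_V: "vg \<in> V"
    and reaches_vg: "\<forall>v\<in>V. (v, vg) \<in> E\<^sup>*"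
begin

abbreviation "S \<equiv> env_states V"
abbreviation "Ed \<equiv> env_edges V E vg"
abbreviation "d w \<equiv> dist_G E w vg"

lemma Some_Some_in_Ed_iff [simp]: "(Some w, Some u) \<in> Ed \<longleftrightarrow> (u, w) \<in> E \<and> u \<noteq> vg"
  by (auto simp: env_edges_def)

lemma Some_None_in_Ed_iff [simp]: "(Some w, None) \<in> Ed \<longleftrightarrow> w \<in> V"
  by (auto simp: env_edges_def)

lemma None_notin_Ed [simp]: "(None, s) \<notin> Ed"
  by (auto simp: env_edges_def)

lemma notin_Ed_Some_vg [simp]: "(s, Some vg) \<notin> Ed"
  by (auto simp: env_edges_def)

lemma parents_Some: "w \<noteq> vg \<Longrightarrow> {p. (p, Some w) \<in> Ed} = Some ` {x. (w, x) \<in> E}"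
  by (auto simp: env_edges_def)

lemma parents_None: "{p. (p, None) \<in> Ed} = Some ` V"
  by (auto simp: env_edges_def)

lemma Some_in_S_iff [simp]: "Some v \<in> S \<longleftrightarrow> v \<in> V"
  and None_in_S [simp]: "None \<in> S"
  by (auto simp: env_states_def)

lemma finite_S: "finite S"
  using finite_V by (simp add: env_states_def)

lemma Ed_subset_S: "Ed \<subseteq> S \<times> S"
  using E_subset by (auto simp: env_states_def env_edges_def)

lemma finite_successors: "finite {x. (w, x) \<in> E}"
  using finite_V E_subset by (auto intro: finite_subset)

lemma relpow_dist: "w \<in> V \<Longrightarrow> (w, vg) \<in> E ^^ d w"
  unfolding dist_G_def using reaches_vg rtrancl_power by (metis (mono_tags, lifting) LeastI_ex)

lemma dist_le: "(w, vg) \<in> E ^^ n \<Longrightarrow> d w \<le> n"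
  unfolding dist_G_def by (rule Least_le)

lemma dist_vg [simp]: "d vg = 0"
  using dist_le[of vg 0] by simp

lemma dist_eq_0_iff: "w \<in> V \<Longrightarrow> d w = 0 \<longleftrightarrow> w = vg"
  using relpow_dist[of w] by auto

lemma dist_edge_le: "(w, x) \<in> E \<Longrightarrow> d w \<le> Suc (d x)"
  using E_subset relpow_dist[of x] by (auto intro: dist_le relpow_Suc_I2)

lemma ex_shortest_step: "w \<in> V \<Longrightarrow> w \<noteq> vg \<Longrightarrow> \<exists>x. (w, x) \<in> E \<and> Suc (d x) = d w"
proof -
  assume w: "w \<in> V" "w \<noteq> vg"
  then obtain m where m: "d w = Suc m"
    using dist_eq_0_iff by (cases "d w") auto
  then obtain x where x: "(w, x) \<in> E" "(x, vg) \<in> E ^^ m"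
    using relpow_dist[OF w(1)] relpow_Suc_D2 by metis
  with m have "Suc (d x) = d w"
    using dist_le[OF x(2)] dist_edge_le[OF x(1)] by simp
  with x show ?thesis by blast
qed

definition next_vertex :: "'a \<Rightarrow> 'a" where
  "next_vertex w = (SOME x. (w, x) \<in> E \<and> Suc (d x) = d w)"

lemma next_vertex:
  "w \<in> V \<Longrightarrow> w \<noteq> vg \<Longrightarrow> (w, next_vertex w) \<in> E \<and> Suc (d (next_vertex w)) = d w"
  unfolding next_vertex_def using ex_shortest_step by (rule someI_ex)

lemma relpow_Ed_imp_relpow_E: "(Some a, Some b) \<in> Ed ^^ n \<Longrightarrow> (b, a) \<in> E ^^ n"
proof (induction n arbitrary: b)
  case 0
  then show ?case by simp
next
  case (Suc n)
  then obtain y where y: "(Some a, y) \<in> Ed ^^ n" "(y, Some b) \<in> Ed"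
    by auto
  then obtain c where "y = Some c" and "(b, c) \<in> E"
    by (cases y) auto
  with y Suc.IH have "(c, a) \<in> E ^^ n"
    by simp
  with \<open>(b, c) \<in> E\<close> show ?case
    by (rule relpow_Suc_I2)
qed

lemma relpow_Ed_dist: "v \<in> V \<Longrightarrow> (Some vg, Some v) \<in> Ed ^^ d v"
proof (induction "d v" arbitrary: v)
  case 0
  then show ?case
    using dist_eq_0_iff by simp
next
  case (Suc n)
  then have "v \<noteq> vg" by auto
  with Suc.prems have step: "(v, next_vertex v) \<in> E" "Suc (d (next_vertex v)) = d v"
    using next_vertex by auto
  have "n = d (next_vertex v)"
    using step(2) Suc.hyps(2) by simp
  moreover have "next_vertex v \<in> V"
    using step(1) E_subset by auto
  ultimately have "(Some vg, Some (next_vertex v)) \<in> Ed ^^ n"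
    using Suc.hyps(1) by metis
  with step \<open>v \<noteq> vg\<close> show ?case
    by (auto simp flip: \<open>Suc n = d v\<close>)
qed

lemma ell_eq_dist: "v \<in> V \<Longrightarrow> ell Ed (Some vg) (Some v) = d v"
  unfolding ell_def dist_G_def[of Ed]
  using relpow_Ed_dist relpow_Ed_imp_relpow_E dist_le by (intro Least_equality) auto

lemma gfn_env: "gfn_env S Ed (Some vg) None"
proof -
  have "(Some vg, s) \<in> Ed\<^sup>* \<and> (s, None) \<in> Ed\<^sup>*" if "s \<in> S" for s
  proof (cases s)
    case None
    then show ?thesis using vg_in_V by auto
  next
    case (Some v)
    with that show ?thesis
      using relpow_Ed_dist[of v] relpow_imp_rtrancl by auto
  qed
  then show ?thesis
    unfolding gfn_env_def using finite_S Ed_subset_S vg_in_V by auto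
qed

lemma terminal_states_eq: "terminal_states Ed None = Some ` V"
  unfolding terminal_states_def using parents_None by simp

lemma hit_prob_Some:
  "w \<noteq> vg \<Longrightarrow> hit_prob Ed (Some vg) P (Suc t) (Some w) =
     (\<Sum>x\<in>{x. (w, x) \<in> E}. P (Some x) (Some w) * hit_prob Ed (Some vg) P t (Some x))"
  by (simp add: parents_Some sum.reindex)

lemma hit_prob_None:
  "hit_prob Ed (Some vg) P (Suc t) None = (\<Sum>v\<in>V. P (Some v) None * hit_prob Ed (Some vg) P t (Some v))"
  by (simp add: parents_None sum.reindex)

lemma hit_prob_below_dist: "v \<in> V \<Longrightarrow> t < d v \<Longrightarrow> hit_prob Ed (Some vg) P t (Some v) = 0"
  using hit_prob_eq_0_below_dist ell_eq_dist unfolding ell_def by metis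

lemma backward_policy_Some:
  assumes "backward_policy S Ed (Some vg) P" and "w \<in> V" and "w \<noteq> vg"
  shows "0 \<le> P (Some x) (Some w)"
    and "(w, x) \<notin> E \<Longrightarrow> P (Some x) (Some w) = 0"
    and "(\<Sum>x\<in>{x. (w, x) \<in> E}. P (Some x) (Some w)) = 1"
proof -
  have "Some w \<in> S - {Some vg}"
    using assms(2,3) by simp
  with assms(1) have "\<forall>s. 0 \<le> P s (Some w)" "\<forall>s. (s, Some w) \<notin> Ed \<longrightarrow> P s (Some w) = 0"
    "(\<Sum>s\<in>{s. (s, Some w) \<in> Ed}. P s (Some w)) = 1"
    unfolding backward_policy_def by blast+
  then show "0 \<le> P (Some x) (Some w)" "(w, x) \<notin> E \<Longrightarrow> P (Some x) (Some w) = 0"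
    "(\<Sum>x\<in>{x. (w, x) \<in> E}. P (Some x) (Some w)) = 1"
    using assms(3) by (simp_all add: parents_Some sum.reindex)
qed

lemma backward_policy_None_sum:
  assumes "backward_policy S Ed (Some vg) P"
  shows "(\<Sum>v\<in>V. P (Some v) None) = 1"
proof -
  have "None \<in> S - {Some vg}"
    by simp
  with assms have "(\<Sum>s\<in>{s. (s, None) \<in> Ed}. P s None) = 1"
    unfolding backward_policy_def by blast
  then show ?thesis
    by (simp add: parents_None sum.reindex)
qed

lemma expected_len_ge:
  assumes pol: "backward_policy S Ed (Some vg) P"
    and finite_len: "expected_len Ed (Some vg) None P < top"
    and start_pos: "\<forall>v\<in>V. 0 < P (Some v) None"
  obtains L where "expected_len Ed (Some vg) None P = ennreal L"
    and "(\<Sum>v\<in>V. P (Some v) None * (real (d v) + 1 - hit_prob Ed (Some vg) P (d v) (Some v))) \<le> L"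
proof -
  define q where "q v = P (Some v) None" for v
  define h where "h = (\<lambda>v t. hit_prob Ed (Some vg) P t (Some v))"
  have mixture: "hit_prob Ed (Some vg) P (Suc t) None = (\<Sum>v\<in>V. q v * h v t)" for t
    unfolding q_def h_def by (rule hit_prob_None)
  note at_None = Ed_subset_S pol None_in_S
  have mass: "(\<lambda>t. hit_prob Ed (Some vg) P (Suc t) None) sums 1"
    using expected_len_finite_mass[OF at_None _ finite_len] by simp
  have moment: "summable (\<lambda>t. hit_prob Ed (Some vg) P (Suc t) None * real t)"
    using expected_len_finite_moment[OF at_None _ finite_len] by simp
  have len: "expected_len Ed (Some vg) None P = ennreal (\<Sum>t. hit_prob Ed (Some vg) P (Suc t) None * real t)"
    by (rule expected_len_eq_ennreal[OF Ed_subset_S pol None_in_S _ mass summable_sums[OF moment]]) simp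
  note mass = mass[unfolded mixture] and moment = moment[unfolded mixture] and len = len[unfolded mixture]
  have h_nonneg: "v \<in> V \<Longrightarrow> 0 \<le> h v t" for v t
    unfolding h_def using hit_prob_nonneg[OF Ed_subset_S pol] by simp
  have h_summable: "v \<in> V \<Longrightarrow> summable (h v)" for v
    unfolding h_def using summable_hit_prob[OF Ed_subset_S pol] by simp
  have h_le_1: "v \<in> V \<Longrightarrow> suminf (h v) \<le> 1" for v
    unfolding h_def using suminf_hit_prob_le_1[OF Ed_subset_S pol] by simp
  have h_mass: "v \<in> V \<Longrightarrow> h v sums 1" for v
    using finite_V start_pos backward_policy_None_sum[OF pol] h_summable h_le_1 mass
    by (intro mixture_sums_1_imp_component_sums_1[of V q h]) (simp_all add: q_def)
  have h_moment: "v \<in> V \<Longrightarrow> summable (\<lambda>t. h v t * real t)" for v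
    using finite_V start_pos h_nonneg moment
    by (intro summable_mixture_component[of V v q h]) (simp_all add: q_def)
  have "(\<Sum>v\<in>V. q v * (real (d v) + 1 - h v (d v))) \<le> (\<Sum>v\<in>V. q v * (\<Sum>t. h v t * real t))"
  proof (intro sum_mono mult_left_mono)
    fix v assume "v \<in> V"
    then show "real (d v) + 1 - h v (d v) \<le> (\<Sum>t. h v t * real t)"
      using h_nonneg h_mass h_moment hit_prob_below_dist by (intro first_moment_ge) (simp_all add: h_def)
    show "0 \<le> q v"
      using start_pos \<open>v \<in> V\<close> by (simp add: q_def less_imp_le)
  qed
  also have "\<dots> = (\<Sum>t. (\<Sum>v\<in>V. q v * h v t) * real t)"
    using h_moment by (simp add: suminf_mixture)
  finally show thesis
    using that len by (simp add: q_def h_def)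
qed

definition shortest_policy :: "('a \<Rightarrow> real) \<Rightarrow> 'a option \<Rightarrow> 'a option \<Rightarrow> real" where
  "shortest_policy q s s' =
     (case (s, s') of
       (Some v, None) \<Rightarrow> if v \<in> V then q v else 0
     | (Some x, Some w) \<Rightarrow> if w \<noteq> vg \<and> x = next_vertex w then 1 else 0
     | _ \<Rightarrow> 0)"

lemma backward_policy_shortest_policy:
  assumes q_nonneg: "\<forall>v\<in>V. 0 \<le> q v" and q_sum: "(\<Sum>v\<in>V. q v) = 1"
  shows "backward_policy S Ed (Some vg) (shortest_policy q)"
  unfolding backward_policy_def
proof (intro ballI conjI allI impI)
  fix s s' assume s': "s' \<in> S - {Some vg}"
  show "0 \<le> shortest_policy q s s'"
    using q_nonneg by (auto simp: shortest_policy_def split: option.splits)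
  show "shortest_policy q s s' = 0" if "(s, s') \<notin> Ed"
    using that s' next_vertex
    by (auto simp: shortest_policy_def env_states_def split: option.splits)
next
  fix s' assume s': "s' \<in> S - {Some vg}"
  show "(\<Sum>s\<in>{s. (s, s') \<in> Ed}. shortest_policy q s s') = 1"
  proof (cases s')
    case None
    then show ?thesis
      using q_sum by (simp add: parents_None sum.reindex shortest_policy_def)
  next
    case (Some w)
    with s' have w: "w \<in> V" "w \<noteq> vg"
      by (auto simp: env_states_def)
    with Some have "(\<Sum>s\<in>{s. (s, s') \<in> Ed}. shortest_policy q s s') =
        (\<Sum>x\<in>{x. (w, x) \<in> E}. if x = next_vertex w then 1 else 0)"
      by (simp add: parents_Some sum.reindex shortest_policy_def)
    also have "\<dots> = 1"
      using next_vertex[OF w] finite_successors by simp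
    finally show ?thesis .
  qed
qed

lemma hit_prob_shortest_policy:
  "w \<in> V \<Longrightarrow> hit_prob Ed (Some vg) (shortest_policy q) t (Some w) = (if t = d w then 1 else 0)"
proof (induction t arbitrary: w)
  case 0
  then show ?case using dist_eq_0_iff by auto
next
  case (Suc t)
  show ?case
  proof (cases "w = vg")
    case True
    then show ?thesis by simp
  next
    case False
    with Suc.prems have step: "(w, next_vertex w) \<in> E" "Suc (d (next_vertex w)) = d w"
      using next_vertex by auto
    then have "next_vertex w \<in> V"
      using E_subset by auto
    have "hit_prob Ed (Some vg) (shortest_policy q) (Suc t) (Some w) =
        (\<Sum>x\<in>{x. (w, x) \<in> E}.
           if x = next_vertex w then hit_prob Ed (Some vg) (shortest_policy q) t (Some x) else 0)"
      unfolding hit_prob_Some[OF False] using False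
      by (intro sum.cong) (auto simp: shortest_policy_def)
    also have "\<dots> = hit_prob Ed (Some vg) (shortest_policy q) t (Some (next_vertex w))"
      using step finite_successors by simp
    also have "\<dots> = (if Suc t = d w then 1 else 0)"
      using Suc.IH[OF \<open>next_vertex w \<in> V\<close>] step by auto
    finally show ?thesis .
  qed
qed

lemma expected_len_shortest_policy:
  assumes q_nonneg: "\<forall>v\<in>V. 0 \<le> q v" and q_sum: "(\<Sum>v\<in>V. q v) = 1"
  shows "expected_len Ed (Some vg) None (shortest_policy q) = ennreal (\<Sum>v\<in>V. q v * real (d v))"
proof (rule expected_len_eq_ennreal[OF Ed_subset_S backward_policy_shortest_policy[OF assms] None_in_S])
  have hit_None: "hit_prob Ed (Some vg) (shortest_policy q) (Suc t) None = (\<Sum>v\<in>V. if t = d v then q v else 0)"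
    for t
    unfolding hit_prob_None
    by (intro sum.cong) (auto simp: hit_prob_shortest_policy shortest_policy_def)
  have "(\<lambda>t. \<Sum>v\<in>V. if t = d v then q v else 0) sums (\<Sum>v\<in>V. q v)"
    by (intro sums_sum sums_single)
  then show "(\<lambda>t. hit_prob Ed (Some vg) (shortest_policy q) (Suc t) None) sums 1"
    using q_sum by (simp only: hit_None)
  have "(\<lambda>t. \<Sum>v\<in>V. if t = d v then q v * real (d v) else 0) sums (\<Sum>v\<in>V. q v * real (d v))"
    by (intro sums_sum sums_single)
  moreover have "(\<Sum>v\<in>V. if t = d v then q v * real (d v) else 0) =
      hit_prob Ed (Some vg) (shortest_policy q) (Suc t) None * real t" for t
    unfolding hit_None sum_distrib_right by (intro sum.cong) auto
  ultimately show "(\<lambda>t. hit_prob Ed (Some vg) (shortest_policy q) (Suc t) None * real t)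
      sums (\<Sum>v\<in>V. q v * real (d v))"
    by simp
qed simp

text \<open>From \<open>x\<close> the goal cannot be reached within \<open>d w - 1\<close> steps, so the mass
  \<open>P(x | w)\<close> is lost for hitting at time \<open>d w\<close>.\<close>
lemma hit_prob_at_dist_le_detour:
  assumes pol: "backward_policy S Ed (Some vg) P" and w: "w \<in> V" "w \<noteq> vg"
    and x: "(w, x) \<in> E" "Suc (d x) \<noteq> d w"
  shows "hit_prob Ed (Some vg) P (d w) (Some w) \<le> 1 - P (Some x) (Some w)"
proof -
  obtain m where m: "d w = Suc m"
    using dist_eq_0_iff w by (cases "d w") auto
  have "x \<in> V"
    using x E_subset by auto
  moreover have "m < d x"
    using dist_edge_le[OF x(1)] x(2) m by simp
  ultimately have lost: "hit_prob Ed (Some vg) P m (Some x) = 0"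
    by (rule hit_prob_below_dist)
  have "hit_prob Ed (Some vg) P (d w) (Some w) =
      (\<Sum>y\<in>{y. (w, y) \<in> E}. P (Some y) (Some w) * hit_prob Ed (Some vg) P m (Some y))"
    unfolding m hit_prob_Some[OF w(2)] ..
  also have "\<dots> \<le> (\<Sum>y\<in>{y. (w, y) \<in> E}. P (Some y) (Some w) - (if y = x then P (Some y) (Some w) else 0))"
  proof (rule sum_mono)
    fix y assume "y \<in> {y. (w, y) \<in> E}"
    then have "hit_prob Ed (Some vg) P m (Some y) \<le> 1"
      using E_subset hit_prob_le_1[OF Ed_subset_S pol] by auto
    then show "P (Some y) (Some w) * hit_prob Ed (Some vg) P m (Some y)
        \<le> P (Some y) (Some w) - (if y = x then P (Some y) (Some w) else 0)"
      using backward_policy_Some(1)[OF pol w] lost by (auto intro: mult_left_le)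
  qed
  also have "\<dots> = 1 - P (Some x) (Some w)"
    using backward_policy_Some(3)[OF pol w] x(1) finite_successors by (simp add: sum_subtractf)
  finally show ?thesis .
qed

lemma
  assumes pol: "backward_policy S Ed (Some vg) PB"
    and q_pos: "\<forall>v\<in>V. 0 < q v" and q_sum: "(\<Sum>v\<in>V. q v) = 1"
    and start: "\<forall>v\<in>V. PB (Some v) None = q v"
    and finite_len: "expected_len Ed (Some vg) None PB < top"
    and optimal: "\<forall>P. backward_policy S Ed (Some vg) P \<and> (\<forall>v\<in>V. P (Some v) None = q v)
        \<and> expected_len Ed (Some vg) None P < top
        \<longrightarrow> expected_len Ed (Some vg) None PB \<le> expected_len Ed (Some vg) None P"
  shows optimal_policy_expected_len:
      "expected_len Ed (Some vg) None PB = ennreal (\<Sum>v\<in>V. q v * real (d v))"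
    and optimal_policy_hits_at_dist: "\<forall>v\<in>V. hit_prob Ed (Some vg) PB (d v) (Some v) = 1"
proof -
  let ?D = "\<Sum>v\<in>V. q v * real (d v)"
  let ?h = "\<lambda>v. hit_prob Ed (Some vg) PB (d v) (Some v)"
  have q_nonneg: "\<forall>v\<in>V. 0 \<le> q v"
    using q_pos by (simp add: less_imp_le)
  obtain L where len: "expected_len Ed (Some vg) None PB = ennreal L"
    and L_ge: "(\<Sum>v\<in>V. q v * (real (d v) + 1 - ?h v)) \<le> L"
    using expected_len_ge[OF pol finite_len] start q_pos by auto
  have "expected_len Ed (Some vg) None PB \<le> ennreal ?D"
    using optimal backward_policy_shortest_policy[OF q_nonneg q_sum]
      expected_len_shortest_policy[OF q_nonneg q_sum]
    by (auto simp: shortest_policy_def)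
  with len have L_le: "L \<le> ?D"
    using q_nonneg by (simp add: ennreal_le_iff sum_nonneg)
  have gap_nonneg: "\<forall>v\<in>V. 0 \<le> q v * (1 - ?h v)"
    using q_nonneg hit_prob_le_1[OF Ed_subset_S pol] by simp
  have "(\<Sum>v\<in>V. q v * (real (d v) + 1 - ?h v)) = ?D + (\<Sum>v\<in>V. q v * (1 - ?h v))"
    by (simp add: sum.distrib[symmetric] algebra_simps)
  moreover have "0 \<le> (\<Sum>v\<in>V. q v * (1 - ?h v))"
    using gap_nonneg by (simp add: sum_nonneg)
  ultimately have gap: "(\<Sum>v\<in>V. q v * (1 - ?h v)) = 0" and "L = ?D"
    using L_ge L_le by linarith+
  with len show "expected_len Ed (Some vg) None PB = ennreal ?D"
    by simp
  from gap gap_nonneg have "\<forall>v\<in>V. q v * (1 - ?h v) = 0"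
    by (subst (asm) sum_nonneg_eq_0_iff[OF finite_V]) auto
  then show "\<forall>v\<in>V. ?h v = 1"
    using q_pos by fastforce
qed

lemma positive_step_shortens_dist:
  assumes pol: "backward_policy S Ed (Some vg) P"
    and hits: "\<forall>v\<in>V. hit_prob Ed (Some vg) P (d v) (Some v) = 1"
    and w: "w \<in> V" "w \<noteq> vg" and pos: "0 < P (Some x) (Some w)"
  shows "(w, x) \<in> E \<and> Suc (d x) = d w"
proof -
  have "(w, x) \<in> E"
    using backward_policy_Some(2)[OF pol w] pos by force
  moreover have "Suc (d x) = d w"
  proof (rule ccontr)
    assume "Suc (d x) \<noteq> d w"
    with hit_prob_at_dist_le_detour[OF pol w \<open>(w, x) \<in> E\<close>] hits w pos show False
      by fastforce
  qed
  ultimately show ?thesis ..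
qed

lemma positive_path_is_shortest:
  assumes pol: "backward_policy S Ed (Some vg) P"
    and hits: "\<forall>v\<in>V. hit_prob Ed (Some vg) P (d v) (Some v) = 1"
    and "v \<in> V" and start: "u 0 = v" and goal: "u k = vg" and avoid: "\<forall>i<k. u i \<noteq> vg"
    and pos: "(\<Prod>i\<in>{1..k}. P (Some (u i)) (Some (u (i - 1)))) > 0"
  shows "(\<forall>i\<in>{1..k}. (u (i - 1), u i) \<in> E) \<and> k = d v"
proof -
  have step: "(u j, u (Suc j)) \<in> E \<and> Suc (d (u (Suc j))) = d (u j)" if "j < k" "u j \<in> V" for j
  proof (rule positive_step_shortens_dist[OF pol hits \<open>u j \<in> V\<close>])
    show "u j \<noteq> vg"
      using avoid that(1) by blast
    have "P (Some (u (Suc j))) (Some (u j)) \<noteq> 0"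
    proof
      assume "P (Some (u (Suc j))) (Some (u j)) = 0"
      with that(1) have "(\<Prod>i\<in>{1..k}. P (Some (u i)) (Some (u (i - 1)))) = 0"
        by (intro prod_zero) (auto intro!: bexI[of _ "Suc j"])
      with pos show False
        by linarith
    qed
    with backward_policy_Some(1)[OF pol \<open>u j \<in> V\<close> \<open>u j \<noteq> vg\<close>, of "u (Suc j)"]
    show "0 < P (Some (u (Suc j))) (Some (u j))"
      by linarith
  qed
  have walk: "u i \<in> V \<and> d (u i) + i = d v" if "i \<le> k" for i
    using that
  proof (induction i)
    case 0
    then show ?case using start \<open>v \<in> V\<close> by simp
  next
    case (Suc i)
    with step[of i] show ?case
      using E_subset by auto
  qed
  have "\<forall>i\<in>{1..k}. (u (i - 1), u i) \<in> E"
  proof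
    fix i assume "i \<in> {1..k}"
    then obtain j where "i = Suc j" "j < k"
      by (cases i) auto
    then show "(u (i - 1), u i) \<in> E"
      using step walk by simp
  qed
  moreover have "k = d v"
    using walk[of k] goal by simp
  ultimately show ?thesis ..
qed

end

theorem mainTheorem5:
  fixes V :: "'a set" and E :: "('a \<times> 'a) set" and vg :: 'a
    and R :: "'a \<Rightarrow> real" and PB :: "'a option \<Rightarrow> 'a option \<Rightarrow> real"
  assumes finV: "finite V" and EV: "E \<subseteq> V \<times> V" and vgV: "vg \<in> V"
    and reach: "\<forall>v\<in>V. (v, vg) \<in> E\<^sup>*"
    and Rpos: "\<forall>v\<in>V. R v > 0"
    and PB_pol: "backward_policy (env_states V) (env_edges V E vg) (Some vg) PB"
    and PB_R: "\<forall>v\<in>V. PB (Some v) None = R v / (\<Sum>w\<in>V. R w)"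
    and PB_fin: "expected_len (env_edges V E vg) (Some vg) None PB < (top::ennreal)"
    and PB_opt: "\<forall>P. backward_policy (env_states V) (env_edges V E vg) (Some vg) P
                   \<and> (\<forall>v\<in>V. P (Some v) None = R v / (\<Sum>w\<in>V. R w))
                   \<and> expected_len (env_edges V E vg) (Some vg) None P < (top::ennreal)
                   \<longrightarrow> expected_len (env_edges V E vg) (Some vg) None PB
                       \<le> expected_len (env_edges V E vg) (Some vg) None P"
  shows "gfn_env (env_states V) (env_edges V E vg) (Some vg) None
       \<and> terminal_states (env_edges V E vg) None = Some ` V
       \<and> (\<forall>v\<in>V. ell (env_edges V E vg) (Some vg) (Some v) = dist_G E v vg)
       \<and> (\<forall>v\<in>V. \<forall>k. \<forall>u :: nat \<Rightarrow> 'a.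
            u 0 = v \<and> u k = vg \<and> (\<forall>i<k. u i \<noteq> vg)
            \<and> (\<Prod>i\<in>{1..k}. PB (Some (u i)) (Some (u (i - 1)))) > 0
            \<longrightarrow> (\<forall>i\<in>{1..k}. (u (i - 1), u i) \<in> E) \<and> k = dist_G E v vg)
       \<and> ((\<forall>v\<in>V. R v = 1) \<longrightarrow>
            expected_len (env_edges V E vg) (Some vg) None PB
              = ennreal ((\<Sum>v\<in>V. real (dist_G E v vg)) / real (card V)))"
proof -
  interpret goal_graph V E vg
    using finV EV vgV reach by unfold_locales
  define q where "q v = R v / (\<Sum>w\<in>V. R w)" for v
  have "(\<Sum>w\<in>V. R w) > 0"
    using Rpos finV vgV by (intro sum_pos) auto
  then have q_pos: "\<forall>v\<in>V. 0 < q v" and q_sum: "(\<Sum>v\<in>V. q v) = 1"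
    using Rpos by (auto simp: q_def simp flip: sum_divide_distrib)
  have start: "\<forall>v\<in>V. PB (Some v) None = q v"
    using PB_R by (simp add: q_def)
  note optimal = PB_pol q_pos q_sum start PB_fin PB_opt[folded q_def]
  have len: "expected_len Ed (Some vg) None PB = ennreal (\<Sum>v\<in>V. q v * real (d v))"
    by (rule optimal_policy_expected_len[OF optimal])
  have hits: "\<forall>v\<in>V. hit_prob Ed (Some vg) PB (d v) (Some v) = 1"
    by (rule optimal_policy_hits_at_dist[OF optimal])
  have "(\<forall>v\<in>V. R v = 1) \<longrightarrow>
      expected_len Ed (Some vg) None PB = ennreal ((\<Sum>v\<in>V. real (d v)) / real (card V))"
    using len by (simp add: q_def sum_divide_distrib)
  then show ?thesis
    using gfn_env terminal_states_eq ell_eq_dist positive_path_is_shortest[OF PB_pol hits] by blast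
qed

end
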